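(* Let $\mathcal A\subset\mathbb R^n$ be compact with diameter $D_{\mathcal A}<\infty$, let $\mathcal X=\mathrm{conv}(\mathcal A)$ or $\mathcal X=\mathrm{lin}(\mathcal A)$, and let $f$ be convex and differentiable with $L$-Lipschitz gradient. Let $\{x_t\}_{t\ge0}$ be generated by the AC-FW algorithm described in the context, let $\eta\in(1,2)$, and assume Conditions (D) and (S) hold, with $R\ge1$ the constant of part (iii) of Condition (S). Let $\{h_t\}_{t\ge0}$ denote the elements of $\mathcal G\cap\mathcal I_\eta$ in increasing order. Then for any $t\ge0$, $$f(x_{h_t})-f(x^\star)\le\frac{\max\left\{\left(\frac{2R}{2-\eta}-1\right)(f(x_0)-f(x^\star)),\ \frac{2LR^2D_{\mathcal A}^2}{2-\eta}\right\}}{t+\frac{2R}{2-\eta}-1}.$$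
   Context: $D_{\mathcal A}:=\sup_{x,y\in\mathcal A}\|x-y\|_2$; $\|\nabla f(x)-\nabla f(y)\|_2\le L\|x-y\|_2$. $x^\star$ is an optimal solution of $\min_{x\in\mathcal X}f(x)$. For $x\ne y$, $\ell(x,y):=2|f(y)-f(x)-\nabla f(x)^\top(y-x)|/\|y-x\|_2^2$, $\ell(x,x):=0$. AC-FW algorithm: given a damping sequence $\{r_t\}_{t\ge0}$ and a direction-finding subroutine, pick $x_{-1}\in\mathcal A$, $x_0\in\arg\min_{v\in\mathcal A}\nabla f(x_{-1})^\top v$, $L_0:=\ell(x_{-1},x_0)$. For $t=0,1,\dots$: $v_t\in\arg\min_{v\in\mathcal A}\nabla f(x_t)^\top v$; the subroutine returns $d_t\in\mathbb R^n$ and $\gamma_t^{\max}\in(0,\infty]$; $\gamma_t:=\min\{\nabla f(x_t)^\top d_t/(L_t\|d_t\|_2^2),\gamma_t^{\max}\}$; $\bar x_{t+1}:=x_t-\gamma_td_t$; $L_{t+1}:=\max\{\ell(x_t,\bar x_{t+1}),r_tL_t\}$; $x_{t+1}:=\bar x_{t+1}$ if $f(\bar x_{t+1})<f(x_t)$, else $x_{t+1}:=x_t$. $\mathcal I_\eta:=\{t\ge0:L_{t+1}\le\eta L_t\}$; $\mathcal G:=\{t\ge0:\gamma_t^{\max}\ge1\text{ or }\gamma_t<\gamma_t^{\max}\}$. Condition (D): $r_t\in(0,1]$ for all $t$ and $\prod_{t\ge0}r_t\in(0,1]$. Condition (S): for all $t\ge0$: (i) $\|d_t\|_2\le D_{\mathcal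 A}$ and $x_t-\gamma d_t\in\mathcal X$ for all finite $\gamma\in[0,\gamma_t^{\max}]$; (ii) $\mathcal G$ is infinite; (iii) since $f$ is convex, there is a constant $R\ge1$ independent of $t$ with $\nabla f(x_t)^\top d_t\ge(f(x_t)-f(x^\star))/R$. *)

theory Defs
  imports "HOL-Analysis.Analysis"
begin

definition ell :: "('a::real_inner \<Rightarrow> real) \<Rightarrow> ('a \<Rightarrow> 'a) \<Rightarrow> 'a \<Rightarrow> 'a \<Rightarrow> real" where
  "ell f g x y = (if x = y then 0
     else 2 * \<bar>f y - f x - g x \<bullet> (y - x)\<bar> / (norm (y - x))\<^sup>2)"

end

(*
  Along the steps in G \<inter> I_eta the estimate Lk (Suc t) \<le> \<eta> Lk t makes the quadratic model
  valid, so a step of length \<gamma> \<le> g(x)\<bullet>d / (Lk \<parallel>d\<parallel>^2) decreases f by at least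
  (1 - \<eta>/2) \<gamma> g(x)\<bullet>d.  With h the primal gap and g(x)\<bullet>d \<ge> h/R, an unclamped step
  therefore removes at least h^2/M, where M = 2 L R^2 D^2/(2 - \<eta>) and D = diameter A, and a
  clamped step with \<gamma> \<ge> 1 at least (2 - \<eta>)/(2R) h.  Both recursions preserve the invariant
  h * (k + a) \<le> max (a h_0) M with a = 2R/(2 - \<eta>) - 1.  The set G \<inter> I_eta is infinite
  because Lk never exceeds L, while by Condition (D) it can grow by a factor \<eta> only finitely
  often.
*)
theory Submission
  imports Defs
begin

lemma DERIV_along_line:
  fixes f :: "'a::real_inner \<Rightarrow> real"
  assumes f_grad: "\<And>y. (f has_derivative (\<lambda>h. g y \<bullet> h)) (at y)"
  shows "DERIV (\<lambda>s. f (x + s *\<^sub>R h)) s :> g (x + s *\<^sub>R h) \<bullet> h"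
proof -
  have "((\<lambda>s. x + s *\<^sub>R h) has_derivative (\<lambda>s'. s' *\<^sub>R h)) (at s)"
    by (auto intro!: derivative_eq_intros)
  from has_derivative_compose[OF this f_grad]
  show ?thesis
    unfolding has_field_derivative_def by (rule has_derivative_eq_rhs) (auto simp: fun_eq_iff)
qed

lemma abs_diff_le_of_DERIV_linear_bound:
  fixes \<psi> \<psi>' :: "real \<Rightarrow> real"
  assumes deriv: "\<And>s. 0 \<le> s \<Longrightarrow> s \<le> 1 \<Longrightarrow> DERIV \<psi> s :> \<psi>' s"
    and bound: "\<And>s. 0 \<le> s \<Longrightarrow> s \<le> 1 \<Longrightarrow> \<bar>\<psi>' s\<bar> \<le> K * s"
  shows "\<bar>\<psi> 1 - \<psi> 0\<bar> \<le> K / 2"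
proof -
  have "(\<lambda>s. \<psi> s - K / 2 * s\<^sup>2) 1 \<le> (\<lambda>s. \<psi> s - K / 2 * s\<^sup>2) 0"
  proof (rule DERIV_nonpos_imp_nonincreasing[where f = "\<lambda>s. \<psi> s - K / 2 * s\<^sup>2"])
    fix s :: real assume "0 \<le> s" "s \<le> 1"
    with deriv bound[of s] show "\<exists>y. DERIV (\<lambda>s. \<psi> s - K / 2 * s\<^sup>2) s :> y \<and> y \<le> 0"
      by (intro exI[of _ "\<psi>' s - K * s"]) (auto intro!: derivative_eq_intros simp: abs_le_iff)
  qed simp
  moreover have "(\<lambda>s. \<psi> s + K / 2 * s\<^sup>2) 0 \<le> (\<lambda>s. \<psi> s + K / 2 * s\<^sup>2) 1"
  proof (rule DERIV_nonneg_imp_nondecreasing[where f = "\<lambda>s. \<psi> s + K / 2 * s\<^sup>2"])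
    fix s :: real assume "0 \<le> s" "s \<le> 1"
    with deriv bound[of s] show "\<exists>y. DERIV (\<lambda>s. \<psi> s + K / 2 * s\<^sup>2) s :> y \<and> 0 \<le> y"
      by (intro exI[of _ "\<psi>' s + K * s"]) (auto intro!: derivative_eq_intros simp: abs_le_iff)
  qed simp
  ultimately show ?thesis
    by (simp add: field_simps split: abs_split)
qed

lemma lipschitz_gradient_taylor_bound:
  fixes f :: "'a::real_inner \<Rightarrow> real"
  assumes f_grad: "\<And>y. (f has_derivative (\<lambda>h. g y \<bullet> h)) (at y)"
    and g_Lip: "\<And>y z. norm (g y - g z) \<le> L * norm (y - z)"
  shows "\<bar>f y - f x - g x \<bullet> (y - x)\<bar> \<le> L / 2 * (norm (y - x))\<^sup>2"
proof -
  define h where "h = y - x"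
  have "\<bar>(g (x + s *\<^sub>R h) - g x) \<bullet> h\<bar> \<le> L * (norm h)\<^sup>2 * s" if "0 \<le> s" for s
  proof -
    have "\<bar>(g (x + s *\<^sub>R h) - g x) \<bullet> h\<bar> \<le> norm (g (x + s *\<^sub>R h) - g x) * norm h"
      by (rule Cauchy_Schwarz_ineq2)
    also have "\<dots> \<le> L * norm (s *\<^sub>R h) * norm h"
      using g_Lip[of "x + s *\<^sub>R h" x] by (intro mult_right_mono) auto
    finally show ?thesis using that by (simp add: power2_eq_square mult_ac)
  qed
  then have "\<bar>(\<lambda>s. f (x + s *\<^sub>R h) - s * (g x \<bullet> h)) 1 - (\<lambda>s. f (x + s *\<^sub>R h) - s * (g x \<bullet> h)) 0\<bar>
      \<le> L * (norm h)\<^sup>2 / 2"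
    by (intro abs_diff_le_of_DERIV_linear_bound[where \<psi>' = "\<lambda>s. (g (x + s *\<^sub>R h) - g x) \<bullet> h"])
      (auto intro!: derivative_eq_intros DERIV_along_line[OF f_grad] simp: inner_diff_left)
  then show ?thesis by (simp add: h_def abs_minus_commute algebra_simps)
qed

lemma ell_le_lipschitz:
  fixes f :: "'a::real_inner \<Rightarrow> real"
  assumes "\<And>y. (f has_derivative (\<lambda>h. g y \<bullet> h)) (at y)"
    and "\<And>y z. norm (g y - g z) \<le> L * norm (y - z)" and "0 \<le> L"
  shows "ell f g x y \<le> L"
  using lipschitz_gradient_taylor_bound[OF assms(1,2), of y x] \<open>0 \<le> L\<close>
  by (auto simp: ell_def divide_le_eq)

lemma upper_bound_of_ell_le:
  fixes f :: "'a::real_inner \<Rightarrow> real"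
  assumes "ell f g x y \<le> M"
  shows "f y \<le> f x + g x \<bullet> (y - x) + M / 2 * (norm (y - x))\<^sup>2"
proof (cases "x = y")
  case False
  then have "2 * \<bar>f y - f x - g x \<bullet> (y - x)\<bar> \<le> M * (norm (y - x))\<^sup>2"
    using assms by (simp add: ell_def divide_le_eq)
  then have "2 * (f y - f x - g x \<bullet> (y - x)) \<le> M * (norm (y - x))\<^sup>2"
    by (smt (verit) abs_ge_self)
  then show ?thesis by (simp add: field_simps)
qed (use assms in \<open>simp add: ell_def\<close>)

lemma quadratic_model_decrease:
  fixes \<gamma> a n L \<eta> :: real
  assumes "0 \<le> \<gamma>" "0 \<le> \<eta>" "\<gamma> * (L * n) \<le> a"
  shows "- \<gamma> * a + \<eta> * L / 2 * \<gamma>\<^sup>2 * n \<le> - (1 - \<eta> / 2) * (\<gamma> * a)"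
proof -
  have "\<eta> / 2 * \<gamma> * (\<gamma> * (L * n)) \<le> \<eta> / 2 * \<gamma> * a"
    using assms by (intro mult_left_mono) auto
  then show ?thesis by (simp add: power2_eq_square algebra_simps)
qed

lemma sublinear_rate_step:
  fixes \<Delta> \<Delta>' s c M C :: real
  assumes "0 \<le> \<Delta>" "1 \<le> s" "\<Delta> * s \<le> C" "0 < M" "M \<le> C" "1 \<le> c * (s + 1)"
    and progress: "\<Delta>' \<le> (1 - c) * \<Delta> \<or> \<Delta>' \<le> \<Delta> - \<Delta>\<^sup>2 / M"
  shows "\<Delta>' * (s + 1) \<le> C"
  using progress
proof
  assume "\<Delta>' \<le> (1 - c) * \<Delta>"
  then have "\<Delta>' * (s + 1) \<le> (1 - c) * \<Delta> * (s + 1)"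
    using \<open>1 \<le> s\<close> by (intro mult_right_mono) auto
  also have "\<dots> = \<Delta> * (s + 1) - \<Delta> * (c * (s + 1))"
    by (simp add: algebra_simps)
  also have "\<dots> \<le> \<Delta> * s"
    using assms(1,6) mult_left_mono[of 1 "c * (s + 1)" \<Delta>] by (simp add: algebra_simps)
  finally show ?thesis using \<open>\<Delta> * s \<le> C\<close> by linarith
next
  assume "\<Delta>' \<le> \<Delta> - \<Delta>\<^sup>2 / M"
  moreover have "\<Delta>\<^sup>2 / C \<le> \<Delta>\<^sup>2 / M"
    using assms(4,5) by (intro divide_left_mono) auto
  ultimately have "\<Delta>' * C \<le> (\<Delta> - \<Delta>\<^sup>2 / C) * C"
    using assms(4,5) by (intro mult_right_mono) auto
  then have "\<Delta>' * C * (s + 1) \<le> (\<Delta> * C - \<Delta>\<^sup>2) * (s + 1)"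
    using assms(2,4,5) by (intro mult_right_mono) (auto simp: algebra_simps)
  also have "\<dots> = \<Delta> * s * (C - \<Delta>) + \<Delta> * (C - \<Delta>)"
    by (simp add: power2_eq_square algebra_simps)
  also have "\<dots> \<le> C * (C - \<Delta>) + \<Delta> * (C - \<Delta>)"
  proof -
    have "\<Delta> \<le> C"
      using assms(1-3) mult_left_mono[of 1 s \<Delta>] by linarith
    then show ?thesis
      using assms(3) by (intro add_right_mono mult_right_mono) auto
  qed
  also have "\<dots> \<le> C * C"
    by (simp add: algebra_simps)
  finally have "(\<Delta>' * (s + 1)) * C \<le> C * C"
    by (simp add: algebra_simps)
  then show ?thesis
    using assms(4,5) by simp
qed

lemma sublinear_rate:
  fixes \<Delta> :: "nat \<Rightarrow> real" and a c M C :: real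
  assumes nonneg: "\<And>k. 0 \<le> \<Delta> k" and "1 \<le> a" "0 \<le> c" "1 \<le> c * (a + 1)"
    and "0 < M" "M \<le> C" "\<Delta> 0 * a \<le> C"
    and progress: "\<And>k. \<Delta> (Suc k) \<le> (1 - c) * \<Delta> k \<or> \<Delta> (Suc k) \<le> \<Delta> k - (\<Delta> k)\<^sup>2 / M"
  shows "\<Delta> k * (real k + a) \<le> C"
proof (induction k)
  case (Suc k)
  have "1 \<le> c * (real k + a + 1)"
    using assms(3,4) mult_left_mono[of "a + 1" "real k + a + 1" c] by simp
  then have "\<Delta> (Suc k) * (real k + a + 1) \<le> C"
    using Suc.IH assms(2) by (intro sublinear_rate_step[OF nonneg _ _ assms(5,6) _ progress]) auto
  then show ?case by (simp add: add_ac)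
qed (use assms in simp)

lemma damped_growth_lower_bound:
  fixes L r :: "nat \<Rightarrow> real"
  assumes "0 \<le> L 0" "0 \<le> \<eta>" "\<And>t. 0 \<le> r t" "\<And>t. r t \<le> 1"
    and damped: "\<And>t. r t * L t \<le> L (Suc t)"
  shows "L 0 * \<eta> ^ card {t. t < T \<and> \<eta> * L t < L (Suc t)} * (\<Prod>t<T. r t) \<le> L T"
proof (induction T)
  case (Suc T)
  define Q where "Q = L 0 * \<eta> ^ card {t. t < T \<and> \<eta> * L t < L (Suc t)} * (\<Prod>t<T. r t)"
  have "0 \<le> Q"
    using assms(1-3) by (simp add: Q_def prod_nonneg)
  show ?case
  proof (cases "\<eta> * L T < L (Suc T)")
    case True
    then have "{t. t < Suc T \<and> \<eta> * L t < L (Suc t)}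
        = insert T {t. t < T \<and> \<eta> * L t < L (Suc t)}"
      by auto
    then have "L 0 * \<eta> ^ card {t. t < Suc T \<and> \<eta> * L t < L (Suc t)} * (\<Prod>t<Suc T. r t)
        = \<eta> * Q * r T"
      by (simp add: Q_def algebra_simps)
    also have "\<dots> \<le> \<eta> * Q"
      using \<open>0 \<le> Q\<close> assms(2,4) mult_left_mono[of "r T" 1 "\<eta> * Q"] by simp
    also have "\<dots> \<le> \<eta> * L T"
      using Suc.IH \<open>0 \<le> \<eta>\<close> by (simp add: Q_def mult_left_mono)
    finally show ?thesis using True by linarith
  next
    case False
    then have "{t. t < Suc T \<and> \<eta> * L t < L (Suc t)} = {t. t < T \<and> \<eta> * L t < L (Suc t)}"
      using less_Suc_eq by auto
    then have "L 0 * \<eta> ^ card {t. t < Suc T \<and> \<eta> * L t < L (Suc t)} * (\<Prod>t<Suc T. r t)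
        = Q * r T"
      by (simp add: Q_def algebra_simps)
    also have "\<dots> \<le> L T * r T"
      using Suc.IH assms(3) by (simp add: Q_def mult_right_mono)
    finally show ?thesis using damped[of T] by (simp add: mult.commute)
  qed
qed simp

lemma finite_growth_steps_of_bounded_damped:
  fixes L r :: "nat \<Rightarrow> real"
  assumes "0 < L 0" "1 < \<eta>" "\<And>t. 0 \<le> r t" "\<And>t. r t \<le> 1"
    and damped: "\<And>t. r t * L t \<le> L (Suc t)"
    and prod_lim: "(\<lambda>T. \<Prod>t<T. r t) \<longlonglongrightarrow> p" and "0 < p"
    and bounded: "\<And>t. L t \<le> B"
  shows "finite {t. \<eta> * L t < L (Suc t)}"
proof (rule ccontr)
  assume "infinite {t. \<eta> * L t < L (Suc t)}"
  have "decseq (\<lambda>T. \<Prod>t<T. r t)"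
    unfolding decseq_Suc_iff using assms(3,4) by (simp add: mult_left_le prod_nonneg)
  with prod_lim have p_le: "p \<le> (\<Prod>t<T. r t)" for T
    using decseq_ge by blast
  obtain N where N: "B / (L 0 * p) < \<eta> ^ N"
    using real_arch_pow \<open>1 < \<eta>\<close> by blast
  obtain F where F: "finite F" "card F = N" "F \<subseteq> {t. \<eta> * L t < L (Suc t)}"
    using infinite_arbitrarily_large \<open>infinite _\<close> by blast
  obtain T where "F \<subseteq> {..<T}"
    using finite_nat_bounded[OF F(1)] by blast
  with F(3) have "F \<subseteq> {t. t < T \<and> \<eta> * L t < L (Suc t)}"
    by auto
  then have "N \<le> card {t. t < T \<and> \<eta> * L t < L (Suc t)}"
    using F(2) by (metis (no_types) card_mono finite_Collect_conjI finite_Collect_less_nat)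
  then have "\<eta> ^ N \<le> \<eta> ^ card {t. t < T \<and> \<eta> * L t < L (Suc t)}"
    using \<open>1 < \<eta>\<close> by (intro power_increasing) auto
  then have "L 0 * \<eta> ^ N * p \<le> L 0 * \<eta> ^ card {t. t < T \<and> \<eta> * L t < L (Suc t)} * (\<Prod>t<T. r t)"
    using assms(1,2) \<open>0 < p\<close> p_le[of T] by (intro mult_mono mult_left_mono) auto
  also have "\<dots> \<le> B"
    using damped_growth_lower_bound[of L \<eta> r T] assms(1-4) damped bounded[of T] by force
  finally show False
    using N assms(1) \<open>0 < p\<close> by (simp add: divide_less_eq mult_ac)
qed

text \<open>Convexity of \<open>f\<close> enters only through Condition (S)(iii).\<close>
locale ac_frank_wolfe =
  fixes A X :: "'a::real_inner set"
    and f :: "'a \<Rightarrow> real" and g :: "'a \<Rightarrow> 'a"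
    and L \<eta> R :: real and xs xm1 :: 'a
    and x d xb :: "nat \<Rightarrow> 'a"
    and gmax :: "nat \<Rightarrow> ereal" and gam Lk r :: "nat \<Rightarrow> real"
  assumes A_bounded: "bounded A" and A_subset_X: "A \<subseteq> X"
    and f_grad: "\<And>y. (f has_derivative (\<lambda>h. g y \<bullet> h)) (at y)"
    and g_Lip: "\<And>y z. norm (g y - g z) \<le> L * norm (y - z)"
    and xs_opt: "\<And>y. y \<in> X \<Longrightarrow> f xs \<le> f y"
    and xm1: "xm1 \<in> A" and x0: "x 0 \<in> A"
    and L0: "Lk 0 = ell f g xm1 (x 0)" and L0_pos: "Lk 0 > 0"
    and gmax_pos: "\<And>t. gmax t > 0"
    and gam_def: "\<And>t. ereal (gam t) = min (ereal (g (x t) \<bullet> d t / (Lk t * (norm (d t))\<^sup>2))) (gmax t)"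
    and xb_def: "\<And>t. xb t = x t - gam t *\<^sub>R d t"
    and L_step: "\<And>t. Lk (Suc t) = max (ell f g (x t) (xb t)) (r t * Lk t)"
    and x_step: "\<And>t. x (Suc t) = (if f (xb t) < f (x t) then xb t else x t)"
    and D_r: "\<And>t. 0 < r t \<and> r t \<le> 1"
    and D_prod: "\<exists>p. 0 < p \<and> p \<le> 1 \<and> (\<lambda>T. \<Prod>t<T. r t) \<longlonglongrightarrow> p"
    and S_i: "\<And>t. norm (d t) \<le> diameter A"
    and S_i': "\<And>t (\<gamma>::real). 0 \<le> \<gamma> \<Longrightarrow> ereal \<gamma> \<le> gmax t \<Longrightarrow> x t - \<gamma> *\<^sub>R d t \<in> X"
    and S_ii: "infinite {t. gmax t \<ge> 1 \<or> ereal (gam t) < gmax t}"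
    and S_iii: "R \<ge> 1" "\<And>t. g (x t) \<bullet> d t \<ge> (f (x t) - f xs) / R"
    and eta: "1 < \<eta>" "\<eta> < 2"
begin

abbreviation G :: "nat set" where
  "G \<equiv> {t. gmax t \<ge> 1 \<or> ereal (gam t) < gmax t}"

abbreviation I_eta :: "nat set" where
  "I_eta \<equiv> {t. Lk (Suc t) \<le> \<eta> * Lk t}"

lemma initial_points_distinct: "xm1 \<noteq> x 0"
  using L0 L0_pos by (auto simp: ell_def)

lemma diameter_pos: "0 < diameter A"
  using diameter_bounded_bound[OF A_bounded xm1 x0] initial_points_distinct
    zero_less_dist_iff[of xm1 "x 0"] by linarith

lemma L_nonneg: "0 \<le> L"
proof -
  have "0 < norm (xm1 - x 0)"
    using initial_points_distinct by simp
  moreover have "0 \<le> L * norm (xm1 - x 0)"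
    using g_Lip[of xm1 "x 0"] norm_ge_zero order_trans by blast
  ultimately show ?thesis by (simp add: zero_le_mult_iff)
qed

lemma Lk_pos: "0 < Lk t"
proof (induction t)
  case (Suc t)
  then have "0 < r t * Lk t" using D_r[of t] by simp
  then show ?case using L_step[of t] by linarith
qed (rule L0_pos)

lemma Lk_le_L: "Lk t \<le> L"
proof (induction t)
  case 0
  show ?case using L0 ell_le_lipschitz[OF f_grad g_Lip L_nonneg] by simp
next
  case (Suc t)
  have "r t * Lk t \<le> Lk t"
    using D_r[of t] Lk_pos[of t] by (simp add: mult_le_cancel_right1)
  then show ?case
    using Suc L_step[of t] ell_le_lipschitz[OF f_grad g_Lip L_nonneg] by simp
qed

lemma L_pos: "0 < L"
  using Lk_pos[of 0] Lk_le_L[of 0] by linarith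

lemma gam_le_gmax: "ereal (gam t) \<le> gmax t"
  using gam_def[of t] by simp

lemma gam_nonneg_if_in_X:
  assumes "x t \<in> X"
  shows "0 \<le> gam t"
proof -
  have "0 \<le> (f (x t) - f xs) / R"
    using xs_opt[OF assms] S_iii(1) by simp
  then have "0 \<le> g (x t) \<bullet> d t / (Lk t * (norm (d t))\<^sup>2)"
    using S_iii(2)[of t] Lk_pos[of t] by simp
  then have "0 \<le> ereal (gam t)"
    unfolding gam_def using gmax_pos[of t] by (auto intro: less_imp_le)
  then show ?thesis by simp
qed

lemma iterate_in_X: "x t \<in> X"
proof (induction t)
  case 0
  show ?case using x0 A_subset_X by auto
next
  case (Suc t)
  then have "xb t \<in> X"
    using S_i' gam_nonneg_if_in_X gam_le_gmax xb_def by simp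
  then show ?case using x_step[of t] Suc by simp
qed

lemma gap_nonneg: "0 \<le> f (x t) - f xs"
  using xs_opt[OF iterate_in_X] by simp

lemma gam_nonneg: "0 \<le> gam t"
  using gam_nonneg_if_in_X[OF iterate_in_X] .

lemma inner_grad_dir_nonneg: "0 \<le> g (x t) \<bullet> d t"
  using gap_nonneg[of t] S_iii by (smt (verit) divide_nonneg_pos)

lemma f_next_le_xb: "f (x (Suc t)) \<le> f (xb t)"
  using x_step[of t] by auto

lemma f_iterates_antimono: "m \<le> n \<Longrightarrow> f (x n) \<le> f (x m)"
proof -
  have "decseq (\<lambda>t. f (x t))"
    unfolding decseq_Suc_iff using x_step by simp
  then show "m \<le> n \<Longrightarrow> f (x n) \<le> f (x m)"
    by (simp add: decseq_def)
qed

lemma gam_mult_le_inner: "gam t * (Lk t * (norm (d t))\<^sup>2) \<le> g (x t) \<bullet> d t"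
proof (cases "d t = 0")
  case False
  then have "0 < Lk t * (norm (d t))\<^sup>2"
    using Lk_pos by simp
  moreover have "ereal (gam t) \<le> ereal (g (x t) \<bullet> d t / (Lk t * (norm (d t))\<^sup>2))"
    unfolding gam_def by simp
  ultimately show ?thesis
    by (simp add: le_divide_eq)
qed simp

lemma step_decrease_on_I:
  assumes "t \<in> I_eta"
  shows "f (xb t) \<le> f (x t) - (1 - \<eta> / 2) * (gam t * (g (x t) \<bullet> d t))"
proof -
  have "ell f g (x t) (xb t) \<le> Lk (Suc t)"
    using L_step[of t] by simp
  then have "f (xb t) \<le> f (x t) + g (x t) \<bullet> (xb t - x t) + Lk (Suc t) / 2 * (norm (xb t - x t))\<^sup>2"
    by (rule upper_bound_of_ell_le)
  also have "\<dots> = f (x t) - gam t * (g (x t) \<bullet> d t) + Lk (Suc t) / 2 * (gam t)\<^sup>2 * (norm (d t))\<^sup>2"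
    by (simp add: xb_def power_mult_distrib)
  also have "\<dots> \<le> f (x t) - gam t * (g (x t) \<bullet> d t) + \<eta> * Lk t / 2 * (gam t)\<^sup>2 * (norm (d t))\<^sup>2"
    using assms by (intro add_left_mono mult_right_mono divide_right_mono) auto
  also have "\<dots> \<le> f (x t) - (1 - \<eta> / 2) * (gam t * (g (x t) \<bullet> d t))"
    using quadratic_model_decrease[where \<gamma> = "gam t" and \<eta> = \<eta> and L = "Lk t"
        and n = "(norm (d t))\<^sup>2" and a = "g (x t) \<bullet> d t"] gam_nonneg gam_mult_le_inner eta
    by (simp add: algebra_simps)
  finally show ?thesis .
qed

lemma gam_on_G:
  assumes "t \<in> G"
  shows "gam t = g (x t) \<bullet> d t / (Lk t * (norm (d t))\<^sup>2) \<or> 1 \<le> gam t"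
proof (cases "ereal (gam t) < gmax t")
  case True
  then show ?thesis
    using gam_def[of t] by (auto simp: min_def split: if_splits)
next
  case False
  then have "gmax t = ereal (gam t)"
    using gam_def[of t] by (simp add: min_def split: if_splits)
  then show ?thesis
    using False assms by simp
qed

lemma gam_inner_ge_if_unclamped:
  assumes "gam t = g (x t) \<bullet> d t / (Lk t * (norm (d t))\<^sup>2)"
  shows "((f (x t) - f xs) / R)\<^sup>2 / (L * (diameter A)\<^sup>2) \<le> gam t * (g (x t) \<bullet> d t)"
proof (cases "d t = 0")
  case True
  then have "(f (x t) - f xs) / R \<le> 0"
    using S_iii(2)[of t] by simp
  then have "f (x t) - f xs \<le> 0"
    using S_iii(1) by (simp add: divide_le_0_iff)
  with gap_nonneg[of t] True show ?thesis by simp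
next
  case False
  have "0 \<le> (f (x t) - f xs) / R"
    using gap_nonneg S_iii(1) by simp
  then have "((f (x t) - f xs) / R)\<^sup>2 \<le> (g (x t) \<bullet> d t)\<^sup>2"
    using S_iii(2) by (intro power_mono) auto
  moreover have "(norm (d t))\<^sup>2 \<le> (diameter A)\<^sup>2"
    using S_i by (intro power_mono) auto
  then have "Lk t * (norm (d t))\<^sup>2 \<le> L * (diameter A)\<^sup>2"
    using Lk_le_L Lk_pos L_nonneg by (intro mult_mono) (auto simp: less_imp_le)
  moreover have "0 < Lk t * (norm (d t))\<^sup>2"
    using Lk_pos False by simp
  ultimately have "((f (x t) - f xs) / R)\<^sup>2 / (L * (diameter A)\<^sup>2)
      \<le> (g (x t) \<bullet> d t)\<^sup>2 / (Lk t * (norm (d t))\<^sup>2)"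
    by (intro frac_le) auto
  then show ?thesis
    using assms by (simp add: power2_eq_square)
qed

lemma gam_inner_ge_if_gam_ge_one:
  assumes "1 \<le> gam t"
  shows "(f (x t) - f xs) / R \<le> gam t * (g (x t) \<bullet> d t)"
  using S_iii(2)[of t] mult_right_mono[OF assms inner_grad_dir_nonneg[of t]] by simp

lemma progress_on_G_I:
  assumes "t \<in> G \<inter> I_eta"
  shows "f (x (Suc t)) - f xs \<le> (1 - (2 - \<eta>) / (2 * R)) * (f (x t) - f xs)
    \<or> f (x (Suc t)) - f xs
      \<le> (f (x t) - f xs) - (f (x t) - f xs)\<^sup>2 / (2 * L * R\<^sup>2 * (diameter A)\<^sup>2 / (2 - \<eta>))"
proof -
  have decrease: "f (x (Suc t)) - f xs \<le> f (x t) - f xs - (1 - \<eta> / 2) * (gam t * (g (x t) \<bullet> d t))"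
    using step_decrease_on_I[of t] f_next_le_xb[of t] assms by simp
  have "1 - \<eta> / 2 > 0"
    using eta by simp
  have "gam t = g (x t) \<bullet> d t / (Lk t * (norm (d t))\<^sup>2) \<or> 1 \<le> gam t"
    using gam_on_G assms by blast
  then show ?thesis
  proof
    assume "gam t = g (x t) \<bullet> d t / (Lk t * (norm (d t))\<^sup>2)"
    from mult_left_mono[OF gam_inner_ge_if_unclamped[OF this], of "1 - \<eta> / 2"] decrease \<open>1 - \<eta> / 2 > 0\<close>
    have "f (x (Suc t)) - f xs
        \<le> (f (x t) - f xs) - (1 - \<eta> / 2) * (((f (x t) - f xs) / R)\<^sup>2 / (L * (diameter A)\<^sup>2))"
      by simp
    then show ?thesis
      using eta by (simp add: field_simps power_divide)
  next
    assume "1 \<le> gam t"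
    from mult_left_mono[OF gam_inner_ge_if_gam_ge_one[OF this], of "1 - \<eta> / 2"] decrease \<open>1 - \<eta> / 2 > 0\<close>
    have "f (x (Suc t)) - f xs \<le> (f (x t) - f xs) - (1 - \<eta> / 2) * ((f (x t) - f xs) / R)"
      by simp
    then show ?thesis
      by (simp add: field_simps)
  qed
qed

lemma infinite_G_I: "infinite (G \<inter> I_eta)"
proof -
  obtain p where "0 < p" "(\<lambda>T. \<Prod>t<T. r t) \<longlonglongrightarrow> p"
    using D_prod by blast
  then have "finite {t. \<eta> * Lk t < Lk (Suc t)}"
    using finite_growth_steps_of_bounded_damped[of Lk \<eta> r p L] L0_pos eta(1) D_r L_step Lk_le_L
    by (simp add: less_imp_le)
  moreover have "G \<inter> I_eta = G - {t. \<eta> * Lk t < Lk (Suc t)}"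
    by auto
  ultimately show ?thesis
    using Diff_infinite_finite S_ii by auto
qed

lemma rate_on_G_I:
  "f (x (enumerate (G \<inter> I_eta) k)) - f xs
    \<le> max ((2 * R / (2 - \<eta>) - 1) * (f (x 0) - f xs)) (2 * L * R\<^sup>2 * (diameter A)\<^sup>2 / (2 - \<eta>))
      / (real k + 2 * R / (2 - \<eta>) - 1)"
proof -
  define h where "h = enumerate (G \<inter> I_eta)"
  define a where "a = 2 * R / (2 - \<eta>) - 1"
  define M where "M = 2 * L * R\<^sup>2 * (diameter A)\<^sup>2 / (2 - \<eta>)"
  define C where "C = max (a * (f (x 0) - f xs)) M"
  have "1 < a"
    using eta S_iii(1) by (simp add: a_def field_simps)
  have "0 < M"
    using L_pos diameter_pos S_iii(1) eta by (simp add: M_def)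
  have "(f (x (h 0)) - f xs) * a \<le> (f (x 0) - f xs) * a"
    using f_iterates_antimono[of 0 "h 0"] \<open>1 < a\<close> by (intro mult_right_mono) auto
  then have init: "(f (x (h 0)) - f xs) * a \<le> C"
    unfolding C_def by (simp add: mult.commute le_max_iff_disj)
  have "0 \<le> (2 - \<eta>) / (2 * R)" "1 \<le> (2 - \<eta>) / (2 * R) * (a + 1)"
    using eta S_iii(1) by (simp_all add: a_def)
  moreover have "M \<le> C"
    by (simp add: C_def)
  moreover have progress: "f (x (h (Suc j))) - f xs \<le> (1 - (2 - \<eta>) / (2 * R)) * (f (x (h j)) - f xs)
      \<or> f (x (h (Suc j))) - f xs \<le> f (x (h j)) - f xs - (f (x (h j)) - f xs)\<^sup>2 / M" for j
  proof -
    have "h j \<in> G \<inter> I_eta" "Suc (h j) \<le> h (Suc j)"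
      using enumerate_in_set[OF infinite_G_I] enumerate_mono[OF _ infinite_G_I, of j "Suc j"]
      by (auto simp: h_def)
    moreover from this(2) have "f (x (h (Suc j))) - f xs \<le> f (x (Suc (h j))) - f xs"
      using f_iterates_antimono by simp
    ultimately show ?thesis
      using progress_on_G_I unfolding M_def by (meson order_trans)
  qed
  ultimately have "(f (x (h k)) - f xs) * (real k + a) \<le> C"
    using sublinear_rate[where \<Delta> = "\<lambda>k. f (x (h k)) - f xs", OF gap_nonneg _ _ _ \<open>0 < M\<close> _ init]
      \<open>1 < a\<close> by simp
  then have "f (x (h k)) - f xs \<le> C / (real k + a)"
    using \<open>1 < a\<close> by (simp add: le_divide_eq)
  then show ?thesis
    by (simp add: a_def C_def M_def h_def add_diff_eq)
qed

end

theorem theorem2: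
  fixes A X :: "(real ^ 'n) set"
    and f :: "real ^ 'n \<Rightarrow> real" and g :: "real ^ 'n \<Rightarrow> real ^ 'n"
    and L \<eta> R :: real and xs xm1 :: "real ^ 'n"
    and x d xb :: "nat \<Rightarrow> real ^ 'n"
    and gmax :: "nat \<Rightarrow> ereal" and gam Lk r :: "nat \<Rightarrow> real"
  assumes A_compact: "compact A" and A_ne: "A \<noteq> {}"
    and X_def: "X = convex hull A \<or> X = span A"
    and f_convex: "convex_on UNIV f"
    and f_grad: "\<And>y. (f has_derivative (\<lambda>h. g y \<bullet> h)) (at y)"
    and g_Lip: "\<And>y z. norm (g y - g z) \<le> L * norm (y - z)"
    and xs_opt: "xs \<in> X" "\<And>y. y \<in> X \<Longrightarrow> f xs \<le> f y"
    (* initialization *)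
    and xm1: "xm1 \<in> A"
    and x0: "x 0 \<in> A" "\<And>v. v \<in> A \<Longrightarrow> g xm1 \<bullet> x 0 \<le> g xm1 \<bullet> v"
    and L0: "Lk 0 = ell f g xm1 (x 0)"
    and L0_pos: "Lk 0 > 0"
    (* iteration *)
    and gmax_pos: "\<And>t. gmax t > 0"
    and gam_def: "\<And>t. ereal (gam t) = min (ereal (g (x t) \<bullet> d t / (Lk t * (norm (d t))\<^sup>2))) (gmax t)"
    and xb_def: "\<And>t. xb t = x t - gam t *\<^sub>R d t"
    and L_step: "\<And>t. Lk (Suc t) = max (ell f g (x t) (xb t)) (r t * Lk t)"
    and x_step: "\<And>t. x (Suc t) = (if f (xb t) < f (x t) then xb t else x t)"
    (* Condition (D) *)
    and D_r: "\<And>t. 0 < r t \<and> r t \<le> 1"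
    and D_prod: "\<exists>p. 0 < p \<and> p \<le> 1 \<and> (\<lambda>T. \<Prod>t<T. r t) \<longlonglongrightarrow> p"
    (* Condition (S) *)
    and S_i: "\<And>t. norm (d t) \<le> diameter A"
    and S_i': "\<And>t (\<gamma>::real). 0 \<le> \<gamma> \<Longrightarrow> ereal \<gamma> \<le> gmax t \<Longrightarrow> x t - \<gamma> *\<^sub>R d t \<in> X"
    and S_ii: "infinite {t. gmax t \<ge> 1 \<or> ereal (gam t) < gmax t}"
    and S_iii: "R \<ge> 1" "\<And>t. g (x t) \<bullet> d t \<ge> (f (x t) - f xs) / R"
    and eta: "1 < \<eta>" "\<eta> < 2"
  shows "infinite ({t. gmax t \<ge> 1 \<or> ereal (gam t) < gmax t} \<inter> {t. Lk (Suc t) \<le> \<eta> * Lk t})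
    \<and> (\<forall>t. f (x (enumerate ({t. gmax t \<ge> 1 \<or> ereal (gam t) < gmax t}
                               \<inter> {t. Lk (Suc t) \<le> \<eta> * Lk t}) t)) - f xs
        \<le> max ((2 * R / (2 - \<eta>) - 1) * (f (x 0) - f xs))
               (2 * L * R\<^sup>2 * (diameter A)\<^sup>2 / (2 - \<eta>))
          / (real t + 2 * R / (2 - \<eta>) - 1))"
proof -
  have "A \<subseteq> X"
    using X_def hull_subset[of A convex] span_superset[of A] by auto
  interpret ac_frank_wolfe A X f g L \<eta> R xs xm1 x d xb gmax gam Lk r
    by unfold_locales (fact assms compact_imp_bounded[OF A_compact] \<open>A \<subseteq> X\<close>)+
  show ?thesis
    using infinite_G_I rate_on_G_I by simp
qed

end
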